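(* Let $d\in\{1,2\}$ and $\mathcal U$ a supercritical update family. There exist $u\in S^{d-1}$, a nonempty set $R\subset\mathbb Z^d$ of the form - if $d=1$: $R=[0,a_1u[\,\cap\,\mathbb Z$ with $a_1>0$ and $a_1u\in\mathbb Z$; - if $d=2$: $R=([0,a_1[\,u+[0,a_2]u^\perp)\cap\mathbb Z^2$ with $a_1>0$, $a_2\ge0$, $a_1u\in\mathbb Z^2$, where $u^\perp$ is a unit vector orthogonal to $u$, and a finite sequence of sites $x_1,\dots,x_p$ in $(a_1u+R)\cup(2a_1u+R)$ such that the following holds for the KCM with update family $\mathcal U$ (any parameter $q$): if at some time $s$ all sites of $R$ are at $0$, and there are times $s<s_1<\dots<s_p$ with $s_i\in\mathcal P^0_{x_i}$ for all $i$, and there is no 1-clock ring at any site of $R\cup\{x_1,\dots,x_p\}$ during $]s,s_p]$, then at time $s_p$ all sites of $a_1u+R$ are at $0$.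
   Context: Update family $\mathcal U$: finite collection of finite nonempty subsets of $\mathbb Z^d\setminus\{0\}$; $u\in S^{d-1}$ is stable if no $X\in\mathcal U$ lies in $\{x:\langle x,u\rangle<0\}$; supercritical means some open hemisphere of $S^{d-1}$ contains no stable direction (for $d=1$ this means some direction in $\{-1,1\}$ is unstable). KCM with parameter $q$ via Harris construction: independent Poisson processes $\mathcal P^0_x$ (rate $q$, 0-clock rings) and $\mathcal P^1_x$ (rate $1-q$, 1-clock rings) at each site; at a ring at $x$, if some $x+X$ ($X\in\mathcal U$) is all $0$ just before, $x$ is set to $0$ (for a 0-clock ring) or $1$ (for a 1-clock ring); otherwise no change. *)

theory Defs
  imports "HOL-Analysis.Analysis"
begin

definition rvec :: "int^'d \<Rightarrow> real^'d" where
  "rvec x = (\<chi> i. real_of_int (x $ i))"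

definition update_family :: "(int^'d) set set \<Rightarrow> bool" where
  "update_family U \<longleftrightarrow> finite U \<and>
     (\<forall>X\<in>U. finite X \<and> X \<noteq> {} \<and> 0 \<notin> X)"

definition stable_dir :: "(int^'d) set set \<Rightarrow> real^'d \<Rightarrow> bool" where
  "stable_dir U u \<longleftrightarrow> norm u = 1 \<and>
     \<not> (\<exists>X\<in>U. \<forall>x\<in>X. inner (rvec x) u < 0)"

definition supercritical :: "(int^'d) set set \<Rightarrow> bool" where
  "supercritical U \<longleftrightarrow>
     (\<exists>v::real^'d. norm v = 1 \<and> (\<forall>u. stable_dir U u \<longrightarrow> inner u v \<le> 0))"

text \<open>Realisation of the Harris clocks: P0 x = 0-clock ring times at x, P1 x = 1-clock
  ring times at x.  Almost sure properties: locally finite, 0- and 1-clocks never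
  ring simultaneously.\<close>
definition harris_clocks :: "(int^'d \<Rightarrow> real set) \<Rightarrow> (int^'d \<Rightarrow> real set) \<Rightarrow> bool" where
  "harris_clocks P0 P1 \<longleftrightarrow>
     (\<forall>x a b. finite {t\<in>P0 x. a \<le> t \<and> t \<le> b} \<and> finite {t\<in>P1 x. a \<le> t \<and> t \<le> b}) \<and>
     (\<forall>x. P0 x \<inter> P1 x = {})"

definition left_val :: "(real \<Rightarrow> int^'d \<Rightarrow> nat) \<Rightarrow> int^'d \<Rightarrow> real \<Rightarrow> nat \<Rightarrow> bool" where
  "left_val \<eta> x t v \<longleftrightarrow> (\<exists>\<epsilon>>0. \<forall>r. t - \<epsilon> < r \<and> r < t \<longrightarrow> \<eta> r x = v)"

definition constraint_before :: "(int^'d) set set \<Rightarrow> (real \<Rightarrow> int^'d \<Rightarrow> nat) \<Rightarrow> int^'d \<Rightarrow> real \<Rightarrow> bool" where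
  "constraint_before U \<eta> x t \<longleftrightarrow> (\<exists>X\<in>U. \<forall>y\<in>X. left_val \<eta> (x + y) t 0)"

definition kcm_traj :: "(int^'d) set set \<Rightarrow> (int^'d \<Rightarrow> real set) \<Rightarrow> (int^'d \<Rightarrow> real set)
    \<Rightarrow> (real \<Rightarrow> int^'d \<Rightarrow> nat) \<Rightarrow> bool" where
  "kcm_traj U P0 P1 \<eta> \<longleftrightarrow>
     (\<forall>t x. \<eta> t x \<in> {0, 1}) \<and>
     (\<forall>t x. \<exists>v. left_val \<eta> x t v) \<and>
     (\<forall>t x. \<exists>\<epsilon>>0. \<forall>r. t \<le> r \<and> r < t + \<epsilon> \<longrightarrow> \<eta> r x = \<eta> t x) \<and>
     (\<forall>t x v. left_val \<eta> x t v \<longrightarrow>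
        \<eta> t x = (if t \<in> P0 x \<and> constraint_before U \<eta> x t then 0
                  else if t \<in> P1 x \<and> constraint_before U \<eta> x t then 1
                  else v))"

end

(*
  A supercritical family has a whole open semicircle of unstable directions (in d = 1, one
  unstable direction). Tilting its centre u slightly, we may assume that the ray R_+ u contains
  lattice points. Let R be a slab {0 <= x.u < h, 0 <= x.u' <= w} (u' orthogonal to u) and z the
  lattice point at height h on the ray. Each site x of the band above z + R has a rule x + X
  lying in R or in the band at a smaller value of a potential psi: psi is x.u plus a small
  quadratic correction in x.u', which makes the rule used at transverse height beta one that is
  unstable for the direction u + (sigma + beta/L) u'. Such rules exist at every height by
  compactness, and near the two edges of the slab there are rules that do not leave it. Listing
  the band by increasing psi gives x_1, ..., x_p: when the 0-clock of x_i rings its rule is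
  entirely 0 (sites of R or earlier x_j), and no zero is undone since no 1-clock rings.
*)

theory Submission
  imports Defs
begin

section \<open>Spreading zeros along a legal sequence\<close>

text \<open>At the infimum c of the times in \<open>[t0, t]\<close> at which y is not 0, y is still 0 (its left
  value is 0 and no 1-clock rings), and right-continuity keeps it 0 a little longer.\<close>

lemma kcm_zero_persists:
  assumes K: "kcm_traj U P0 P1 \<eta>" and zero: "\<eta> t0 y = 0"
    and no_one: "\<forall>t\<in>P1 y. \<not> (t0 < t \<and> t \<le> T)"
    and "t0 \<le> t" "t \<le> T"
  shows "\<eta> t y = 0"
proof (rule ccontr)
  assume nonzero: "\<eta> t y \<noteq> 0"
  define S where "S = {r. t0 \<le> r \<and> r \<le> t \<and> \<eta> r y \<noteq> 0}"
  define c where "c = Inf S"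
  have "t \<in> S" using assms nonzero by (simp add: S_def)
  have bdd: "bdd_below S" by (auto simp: S_def bdd_below_def)
  have c_le: "c \<le> r" if "r \<in> S" for r using bdd that by (simp add: c_def cInf_lower)
  have "t0 \<le> c" using \<open>t \<in> S\<close> by (auto simp: c_def S_def intro!: cInf_greatest)
  have zero_before: "\<eta> r y = 0" if "t0 \<le> r" "r < c" for r
    using c_le[of r] c_le[OF \<open>t \<in> S\<close>] that by (force simp: S_def)
  have zero_at: "\<eta> c y = 0"
  proof (cases "c = t0")
    case False
    then have "t0 < c" using \<open>t0 \<le> c\<close> by simp
    then have "left_val \<eta> y c 0"
      unfolding left_val_def using zero_before by (intro exI[of _ "c - t0"]) auto
    moreover have "c \<notin> P1 y" using no_one \<open>t0 < c\<close> c_le[OF \<open>t \<in> S\<close>] \<open>t \<le> T\<close> by auto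
    ultimately show ?thesis using K unfolding kcm_traj_def by auto
  qed (use zero in simp)
  obtain \<epsilon> where "\<epsilon> > 0" and right: "\<forall>r. c \<le> r \<and> r < c + \<epsilon> \<longrightarrow> \<eta> r y = \<eta> c y"
    using K unfolding kcm_traj_def by blast
  have "c + \<epsilon> \<le> Inf S"
  proof (rule cInf_greatest)
    show "S \<noteq> {}" using \<open>t \<in> S\<close> by auto
    fix r assume "r \<in> S"
    then show "c + \<epsilon> \<le> r" using c_le[of r] right zero_at by (force simp: S_def)
  qed
  then show False using \<open>\<epsilon> > 0\<close> by (simp add: c_def)
qed

definition legal_sequence :: "(int^'d) set set \<Rightarrow> (int^'d) set \<Rightarrow> (int^'d) list \<Rightarrow> bool" where
  "legal_sequence U R xs \<longleftrightarrow>
     (\<forall>i < length xs. \<exists>X\<in>U. (\<lambda>y. xs!i + y) ` X \<subseteq> R \<union> set (take i xs))"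

lemma kcm_legal_sequence_zero:
  assumes K: "kcm_traj U P0 P1 \<eta>" and legal: "legal_sequence U R xs"
    and len: "length ss = length xs" and "s < hd ss" and sorted: "sorted_wrt (<) ss"
    and rings: "\<forall>i < length xs. ss ! i \<in> P0 (xs ! i)"
    and no_one: "\<forall>y \<in> R \<union> set xs. \<forall>t \<in> P1 y. \<not> (s < t \<and> t \<le> last ss)"
    and zero: "\<forall>y \<in> R. \<eta> s y = 0"
    and "i < length xs" "ss!i \<le> t" "t \<le> last ss"
  shows "\<eta> t (xs!i) = 0"
  using assms(9-11)
proof (induction i arbitrary: t rule: less_induct)
  case (less i)
  have earlier: "ss!j < ss!i" if "j < i" for j
    using sorted that less.prems len by (simp add: sorted_wrt_iff_nth_less)
  have "ss \<noteq> []" using less.prems len by auto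
  then have after_s: "s < ss!i"
    using \<open>s < hd ss\<close> earlier[of 0] by (cases i) (auto simp: hd_conv_nth)
  have R_zero: "\<eta> r y = 0" if "y \<in> R" "s \<le> r" "r \<le> last ss" for y r
    using kcm_zero_persists[OF K _ _ that(2,3)] zero no_one that(1) by blast
  obtain X where "X \<in> U" and X: "(\<lambda>y. xs!i + y) ` X \<subseteq> R \<union> set (take i xs)"
    using legal less.prems unfolding legal_sequence_def by blast
  have "left_val \<eta> (xs!i + y) (ss!i) 0" if "y \<in> X" for y
  proof (cases "xs!i + y \<in> R")
    case True
    then show ?thesis unfolding left_val_def using after_s less.prems
      by (intro exI[of _ "ss!i - s"]) (auto intro!: R_zero)
  next
    case False
    then obtain j where "j < i" and site: "xs!i + y = xs!j"
      using X \<open>y \<in> X\<close> less.prems by (force simp: in_set_conv_nth)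
    then show ?thesis unfolding left_val_def site using earlier[of j] less.prems
      by (intro exI[of _ "ss!i - ss!j"]) (auto intro!: less.IH)
  qed
  then have "constraint_before U \<eta> (xs!i) (ss!i)"
    unfolding constraint_before_def using \<open>X \<in> U\<close> by blast
  moreover obtain v where "left_val \<eta> (xs!i) (ss!i) v"
    using K unfolding kcm_traj_def by blast
  ultimately have "\<eta> (ss!i) (xs!i) = 0"
    using K rings less.prems unfolding kcm_traj_def by auto
  moreover have "\<forall>r\<in>P1 (xs!i). \<not> (ss!i < r \<and> r \<le> last ss)"
    using no_one after_s less.prems by fastforce
  ultimately show ?case using kcm_zero_persists[OF K] less.prems by blast
qed

definition fillable :: "(int^'d) set set \<Rightarrow> (int^'d) set \<Rightarrow> (int^'d) set \<Rightarrow> (int^'d \<Rightarrow> real) \<Rightarrow> bool" where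
  "fillable U R P \<psi> \<longleftrightarrow> (\<forall>x\<in>P. \<exists>X\<in>U. \<forall>y\<in>X. x + y \<in> R \<or> (x + y \<in> P \<and> \<psi> (x + y) < \<psi> x))"

lemma legal_sequence_sort_key:
  assumes fill: "fillable U R (set xs) \<psi>"
  shows "legal_sequence U R (sort_key \<psi> xs)"
  unfolding legal_sequence_def
proof (intro allI impI)
  fix i assume "i < length (sort_key \<psi> xs)"
  define ys where "ys = sort_key \<psi> xs"
  have i: "i < length ys" and sorted: "sorted (map \<psi> ys)" and set_ys: "set ys = set xs"
    using \<open>i < length (sort_key \<psi> xs)\<close> by (simp_all add: ys_def)
  then obtain X where "X \<in> U"
    and X: "\<forall>y\<in>X. ys!i + y \<in> R \<or> (ys!i + y \<in> set xs \<and> \<psi> (ys!i + y) < \<psi> (ys!i))"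
    using fill nth_mem unfolding fillable_def by metis
  have "ys!i + y \<in> set (take i ys)"
    if mem: "ys!i + y \<in> set xs" and lower: "\<psi> (ys!i + y) < \<psi> (ys!i)" for y
  proof -
    obtain j where j: "j < length ys" "ys!j = ys!i + y"
      using mem set_ys by (metis in_set_conv_nth)
    have "j < i"
    proof (rule ccontr)
      assume "\<not> j < i"
      then have "\<psi> (ys!i) \<le> \<psi> (ys!j)" using sorted_nth_mono[OF sorted, of i j] j by simp
      then show False using j(2) lower by simp
    qed
    then have "take i ys ! j = ys!j" "j < length (take i ys)" using j by simp_all
    then show ?thesis using j(2) by (metis nth_mem)
  qed
  then have "(\<lambda>y. ys!i + y) ` X \<subseteq> R \<union> set (take i ys)" using X by blast
  then show "\<exists>X\<in>U. (\<lambda>y. sort_key \<psi> xs!i + y) ` X \<subseteq> R \<union> set (take i (sort_key \<psi> xs))"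
    using \<open>X \<in> U\<close> by (auto simp: ys_def)
qed

definition zero_spreading :: "(int^'d) set set \<Rightarrow> (int^'d) set \<Rightarrow> (int^'d) list \<Rightarrow> (int^'d) set \<Rightarrow> bool" where
  "zero_spreading U R xs T \<longleftrightarrow>
     (\<forall>P0 P1 \<eta> (s::real) (ss::real list).
        harris_clocks P0 P1 \<longrightarrow> kcm_traj U P0 P1 \<eta> \<longrightarrow>
        length ss = length xs \<longrightarrow> s < hd ss \<longrightarrow> sorted_wrt (<) ss \<longrightarrow>
        (\<forall>i < length xs. ss ! i \<in> P0 (xs ! i)) \<longrightarrow>
        (\<forall>y \<in> R \<union> set xs. \<forall>t \<in> P1 y. \<not> (s < t \<and> t \<le> last ss)) \<longrightarrow>
        (\<forall>y \<in> R. \<eta> s y = 0) \<longrightarrow>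
        (\<forall>y \<in> T. \<eta> (last ss) y = 0))"

lemma legal_sequence_zero_spreading:
  assumes "legal_sequence U R xs" "T \<subseteq> set xs"
  shows "zero_spreading U R xs T"
  unfolding zero_spreading_def
proof (intro allI impI ballI)
  fix P0 P1 \<eta> s ss y
  assume K: "kcm_traj U P0 P1 \<eta>" and len: "length ss = length xs" and s: "s < hd ss"
    and sorted: "sorted_wrt (<) ss" and rings: "\<forall>i < length xs. ss ! i \<in> P0 (xs ! i)"
    and no_one: "\<forall>y \<in> R \<union> set xs. \<forall>t \<in> P1 y. \<not> (s < t \<and> t \<le> last ss)"
    and zero: "\<forall>y \<in> R. \<eta> s y = 0" and "y \<in> T"
  then obtain i where i: "i < length xs" "xs!i = y"
    using assms(2) by (meson in_set_conv_nth subsetD)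
  have "ss \<noteq> []" using i len by auto
  then have "ss!i \<le> last ss"
    using sorted i len
    by (cases "i = length ss - 1") (auto simp: last_conv_nth sorted_wrt_iff_nth_less less_imp_le)
  then show "\<eta> (last ss) y = 0"
    using kcm_legal_sequence_zero[OF K assms(1) len s sorted rings no_one zero i(1)
        \<open>ss!i \<le> last ss\<close> order.refl] i(2)
    by simp
qed

lemma zero_spreading_of_fillable:
  assumes "finite P" "fillable U R P \<psi>" "T \<subseteq> P"
  obtains xs where "set xs = P" "zero_spreading U R xs T"
proof -
  obtain xs where xs: "set xs = P" using finite_list[OF assms(1)] by blast
  let ?ys = "sort_key \<psi> xs"
  have "legal_sequence U R ?ys" using legal_sequence_sort_key assms(2) xs by blast
  then have "zero_spreading U R ?ys T" using legal_sequence_zero_spreading assms(3) xs by (metis set_sort)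
  then show ?thesis using that xs by (metis set_sort)
qed

section \<open>Rules unstable along a line of directions\<close>

lemma uniform_rule_at_bot:
  fixes A B :: "'a \<Rightarrow> real"
  assumes fin: "finite U" and finX: "\<forall>X\<in>U. finite X \<and> X \<noteq> {}"
    and Q: "\<forall>s. \<exists>X\<in>U. \<forall>y\<in>X. A y + s * B y < 0"
  obtains X s0 \<delta> where "X \<in> U" "\<forall>y\<in>X. B y \<ge> 0 \<and> (B y = 0 \<longrightarrow> A y < 0)" "\<delta> > 0"
    "\<forall>s\<le>s0. \<forall>y\<in>X. A y + s * B y \<le> -\<delta>"
proof -
  define good where "good n X \<longleftrightarrow> (\<forall>y\<in>X. A y - real n * B y < 0)" for n X
  have "\<forall>n\<in>UNIV. \<exists>X\<in>U. good n X"
  proof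
    fix n :: nat
    obtain X where "X \<in> U" "\<forall>y\<in>X. A y + (- real n) * B y < 0" using Q by blast
    then show "\<exists>X\<in>U. good n X" by (auto simp: good_def)
  qed
  then obtain X where "X \<in> U" and "infinite {n. good n X}"
    using pigeonhole_infinite_rel[OF infinite_UNIV_nat fin] by auto
  then have unbounded: "\<forall>m. \<exists>n\<ge>m. good n X" by (simp add: infinite_nat_iff_unbounded_le)
  have B_nonneg: "B y \<ge> 0" if "y \<in> X" for y
  proof (rule ccontr)
    assume "\<not> B y \<ge> 0"
    obtain n where n: "n \<ge> nat \<lceil>\<bar>A y\<bar> / (- B y)\<rceil>" "good n X" using unbounded by blast
    have "\<bar>A y\<bar> / (- B y) \<le> real n" using n(1) by linarith
    moreover have "0 < - B y" using \<open>\<not> B y \<ge> 0\<close> by simp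
    ultimately have "\<bar>A y\<bar> \<le> real n * (- B y)" using pos_divide_le_eq by blast
    then show False using n(2) that by (auto simp: good_def)
  qed
  obtain n0 where n0: "good n0 X" using unbounded by blast
  define \<delta> where "\<delta> = Min ((\<lambda>y. real n0 * B y - A y) ` X)"
  have "finite X" "X \<noteq> {}" using finX \<open>X \<in> U\<close> by auto
  then have "\<delta> > 0" using n0 by (auto simp: \<delta>_def good_def)
  have "A y + s * B y \<le> -\<delta>" if "s \<le> - real n0" "y \<in> X" for s y
  proof -
    have "\<delta> \<le> real n0 * B y - A y"
      unfolding \<delta>_def using \<open>finite X\<close> that(2) by (intro Min_le) auto
    moreover have "s * B y \<le> (- real n0) * B y" using that B_nonneg by (intro mult_right_mono)
    ultimately show ?thesis by simp
  qed
  moreover have "B y = 0 \<longrightarrow> A y < 0" if "y \<in> X" for y using n0 that by (auto simp: good_def)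
  ultimately show ?thesis
    using that[OF \<open>X \<in> U\<close> _ \<open>\<delta> > 0\<close>, of "- real n0"] B_nonneg by simp
qed

lemma uniform_rule_on_interval:
  fixes A B :: "'a \<Rightarrow> real"
  assumes finX: "\<forall>X\<in>U. finite X \<and> X \<noteq> {}"
    and Q: "\<forall>s. \<exists>X\<in>U. \<forall>y\<in>X. A y + s * B y < 0"
  obtains \<delta> where "\<delta> > 0" "\<forall>s\<in>{lo..hi}. \<exists>X\<in>U. \<forall>y\<in>X. A y + s * B y \<le> -\<delta>"
proof -
  define margin where "margin X n = {s. \<forall>y\<in>X. A y + s * B y < - 1 / (real n + 1)}" for X n
  have "open (margin X n)" if "X \<in> U" for X n
  proof -
    have "margin X n = (\<Inter>y\<in>X. {s. A y + s * B y < - 1 / (real n + 1)})"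
      by (auto simp: margin_def)
    moreover have "open {s. A y + s * B y < - 1 / (real n + 1)}" for y
      by (intro open_Collect_less continuous_intros)
    ultimately show ?thesis using that finX by (auto intro!: open_INT)
  qed
  then have open_margin: "open (case_prod margin c)" if "c \<in> U \<times> UNIV" for c
    using that by auto
  have cover: "{lo..hi} \<subseteq> (\<Union>c\<in>U \<times> UNIV. case_prod margin c)"
  proof
    fix s assume "s \<in> {lo..hi}"
    obtain X where X: "X \<in> U" "\<forall>y\<in>X. A y + s * B y < 0" using Q by blast
    define m where "m = Max ((\<lambda>y. A y + s * B y) ` X)"
    have "finite X" "X \<noteq> {}" using finX X by auto
    then have le_m: "\<forall>y\<in>X. A y + s * B y \<le> m" by (simp add: m_def)
    have "m \<in> (\<lambda>y. A y + s * B y) ` X"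
      unfolding m_def using \<open>finite X\<close> \<open>X \<noteq> {}\<close> by (intro Max_in) auto
    then have "m < 0" using X(2) by auto
    obtain n :: nat where "inverse (real (Suc n)) < - m"
      using reals_Archimedean[of "- m"] \<open>m < 0\<close> by auto
    then have "1 / (real n + 1) < - m" by (simp add: inverse_eq_divide add.commute)
    then have "s \<in> margin X n" using le_m by (auto simp: margin_def)
    then show "s \<in> (\<Union>c\<in>U \<times> UNIV. case_prod margin c)" using X(1) by (intro UN_I[of "(X, n)"]) auto
  qed
  obtain C where C: "C \<subseteq> U \<times> UNIV" "finite C" "{lo..hi} \<subseteq> (\<Union>c\<in>C. case_prod margin c)"
    using compactE_image[OF compact_Icc open_margin cover] .
  define N where "N = (\<Sum>c\<in>C. snd c)"
  have "\<exists>X\<in>U. \<forall>y\<in>X. A y + s * B y \<le> - (1 / (real N + 1))" if s: "s \<in> {lo..hi}" for s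
  proof -
    obtain c where "c \<in> C" "s \<in> case_prod margin c" using C(3) s by blast
    then obtain X n where c: "(X, n) \<in> C" "s \<in> margin X n" by (cases c) auto
    have "n \<le> N" unfolding N_def using C(2) member_le_sum[OF c(1), of snd] by simp
    then have "1 / (real N + 1) \<le> 1 / (real n + 1)" by (simp add: frac_le)
    then have "\<forall>y\<in>X. A y + s * B y \<le> - (1 / (real N + 1))"
      using c(2) unfolding margin_def by fastforce
    then show ?thesis using C(1) c(1) by blast
  qed
  then show ?thesis using that[of "1 / (real N + 1)"] by auto
qed

text \<open>Near the bottom of the slab a rule from \<open>uniform_rule_at_bot\<close> is used (it never lowers
  the height), near the top its mirror image, and in between the compactness argument.\<close>
lemma slab_rules:
  fixes A B :: "'a \<Rightarrow> real"
  assumes fin: "finite U" and finX: "\<forall>X\<in>U. finite X \<and> X \<noteq> {}"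
    and Q: "\<forall>s. \<exists>X\<in>U. \<forall>y\<in>X. A y + s * B y < 0"
    and D: "\<forall>X\<in>U. \<forall>y\<in>X. \<bar>A y\<bar> \<le> D \<and> \<bar>B y\<bar> \<le> D"
  obtains \<delta> c \<sigma> where "\<delta> > 0" "c \<ge> 2"
    "\<And>L \<beta>. L \<ge> D + 1 \<Longrightarrow> 0 \<le> \<beta> \<Longrightarrow> \<beta> \<le> L * c \<Longrightarrow>
       \<exists>X\<in>U. \<forall>y\<in>X. A y + (\<sigma> + \<beta> / L) * B y \<le> -\<delta> \<and> 0 \<le> \<beta> + B y \<and> \<beta> + B y \<le> L * c"
proof -
  obtain X0 s0 \<delta>0 where X0: "X0 \<in> U" "\<forall>y\<in>X0. B y \<ge> 0 \<and> (B y = 0 \<longrightarrow> A y < 0)"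
    "\<delta>0 > 0" "\<forall>s\<le>s0. \<forall>y\<in>X0. A y + s * B y \<le> -\<delta>0"
    using uniform_rule_at_bot[OF fin finX Q] .
  have Q': "\<forall>s. \<exists>X\<in>U. \<forall>y\<in>X. A y + s * (- B y) < 0"
  proof
    fix s
    obtain X where "X \<in> U" "\<forall>y\<in>X. A y + (- s) * B y < 0" using Q by blast
    then show "\<exists>X\<in>U. \<forall>y\<in>X. A y + s * (- B y) < 0" by auto
  qed
  obtain X1 s1 \<delta>1 where X1: "X1 \<in> U" "\<forall>y\<in>X1. - B y \<ge> 0 \<and> (- B y = 0 \<longrightarrow> A y < 0)"
    "\<delta>1 > 0" "\<forall>s\<le>s1. \<forall>y\<in>X1. A y + s * (- B y) \<le> -\<delta>1"
    using uniform_rule_at_bot[OF fin finX Q'] .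
  define \<sigma> where "\<sigma> = s0 - 1"
  define c where "c = max (1 - s1) (\<sigma> + 2) - \<sigma>"
  obtain \<delta>2 where "\<delta>2 > 0" and X2: "\<forall>s\<in>{\<sigma>..\<sigma> + c}. \<exists>X\<in>U. \<forall>y\<in>X. A y + s * B y \<le> -\<delta>2"
    using uniform_rule_on_interval[OF finX Q] .
  define \<delta> where "\<delta> = min \<delta>0 (min \<delta>1 \<delta>2)"
  have "0 \<le> D"
  proof -
    obtain X where "X \<in> U" using Q by blast
    then obtain y where "y \<in> X" using finX by blast
    then show ?thesis using D \<open>X \<in> U\<close> by force
  qed
  show ?thesis
  proof (rule that[of \<delta> c \<sigma>])
    show "\<delta> > 0" using X0(3) X1(3) \<open>\<delta>2 > 0\<close> by (simp add: \<delta>_def)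
    show "c \<ge> 2" by (simp add: c_def)
    fix L \<beta> assume L: "L \<ge> D + 1" and \<beta>: "0 \<le> \<beta>" "\<beta> \<le> L * c"
    have "L > 0" using L \<open>0 \<le> D\<close> by simp
    have "L * c \<ge> L * 2" using \<open>c \<ge> 2\<close> \<open>L > 0\<close> by (intro mult_left_mono) auto
    then have wide: "L * c \<ge> 2 * D" using L by simp
    consider (bottom) "\<beta> < D" | (top) "\<beta> > L * c - D" | (middle) "D \<le> \<beta>" "\<beta> \<le> L * c - D"
      by linarith
    then show "\<exists>X\<in>U. \<forall>y\<in>X. A y + (\<sigma> + \<beta> / L) * B y \<le> -\<delta> \<and> 0 \<le> \<beta> + B y \<and> \<beta> + B y \<le> L * c"
    proof cases
      case bottom
      then have "\<beta> / L \<le> 1" using L \<open>L > 0\<close> by (simp add: divide_le_eq)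
      then have "\<sigma> + \<beta> / L \<le> s0" by (simp add: \<sigma>_def)
      then show ?thesis using X0 D bottom wide \<beta> unfolding \<delta>_def
        by (intro bexI[OF _ X0(1)] ballI conjI) force+
    next
      case top
      have "L * c - D \<le> \<beta>" using top by simp
      then have "(L * c - D) / L \<le> \<beta> / L" using \<open>L > 0\<close> by (simp add: divide_right_mono)
      moreover have "(L * c - D) / L = c - D / L" using \<open>L > 0\<close> by (simp add: field_simps)
      moreover have "D / L \<le> 1" using L \<open>L > 0\<close> by simp
      ultimately have "- (\<sigma> + \<beta> / L) \<le> s1" unfolding c_def by linarith

      have "\<forall>y\<in>X1. A y + (\<sigma> + \<beta> / L) * B y \<le> -\<delta>1"
      proof
        fix y assume "y \<in> X1"
        then have "A y + (- (\<sigma> + \<beta> / L)) * (- B y) \<le> -\<delta>1"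
          using X1(4) \<open>- (\<sigma> + \<beta> / L) \<le> s1\<close> by blast
        then show "A y + (\<sigma> + \<beta> / L) * B y \<le> -\<delta>1" by (simp add: algebra_simps)
      qed
      moreover have "- D \<le> B y" "B y \<le> 0" if "y \<in> X1" for y
        using X1(1,2) D that by force+
      ultimately show ?thesis using top wide \<beta> unfolding \<delta>_def
        by (intro bexI[OF _ X1(1)] ballI conjI) (smt (verit))+
    next
      case middle
      have "\<beta> / L \<le> c" using \<beta> \<open>L > 0\<close> by (simp add: divide_le_eq mult.commute)
      then have "\<sigma> + \<beta> / L \<in> {\<sigma>..\<sigma> + c}" using \<beta> \<open>L > 0\<close> by simp
      then obtain X where "X \<in> U" "\<forall>y\<in>X. A y + (\<sigma> + \<beta> / L) * B y \<le> -\<delta>2" using X2 by blast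
      then show ?thesis using D middle unfolding \<delta>_def
        by (intro bexI[OF _ \<open>X \<in> U\<close>] ballI conjI) force+
    qed
  qed
qed

section \<open>Slab droplets\<close>

lemma rvec_add [simp]: "rvec (x + y) = rvec x + rvec y"
  by (simp add: rvec_def vec_eq_iff)

lemma rvec_diff [simp]: "rvec (x - y) = rvec x - rvec y"
  by (simp add: rvec_def vec_eq_iff)

lemma rvec_zero [simp]: "rvec 0 = 0"
  by (simp add: rvec_def vec_eq_iff)

lemma rvec_int_scale: "rvec (k *s x) = real_of_int k *\<^sub>R rvec x"
  by (simp add: rvec_def vec_eq_iff)

lemma finite_rvec_norm_le: "finite {x :: int^'d. norm (rvec x) \<le> M}"
proof -
  define m where "m = \<lceil>M\<rceil>"
  have "{x :: int^'d. norm (rvec x) \<le> M} \<subseteq> vec_lambda ` (PiE UNIV (\<lambda>_. {-m..m}))"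
  proof
    fix x :: "int^'d" assume x: "x \<in> {x. norm (rvec x) \<le> M}"
    have "\<bar>x$k\<bar> \<le> m" for k
    proof -
      have "real_of_int \<bar>x$k\<bar> \<le> norm (rvec x)"
        using component_le_norm_cart[of "rvec x" k] by (simp add: rvec_def)
      also have "\<dots> \<le> M" using x by simp
      also have "\<dots> \<le> real_of_int m" unfolding m_def by (rule le_of_int_ceiling)
      finally show ?thesis by simp
    qed
    then have "vec_nth x \<in> PiE UNIV (\<lambda>_. {-m..m})" by (auto simp: abs_le_iff minus_le_iff)
    then show "x \<in> vec_lambda ` (PiE UNIV (\<lambda>_. {-m..m}))" by (rule rev_image_eqI) simp
  qed
  moreover have "finite (vec_lambda ` (PiE (UNIV::'d set) (\<lambda>_. {-m..m})))"
    by (intro finite_imageI finite_PiE) auto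
  ultimately show ?thesis by (rule finite_subset)
qed

text \<open>Every direction \<open>a + s b\<close> is unstable; for orthogonal unit vectors a, b in the plane
  these are the directions of the open semicircle centred at a.\<close>
definition unstable_line :: "(int^'d) set set \<Rightarrow> real^'d \<Rightarrow> real^'d \<Rightarrow> bool" where
  "unstable_line U a b \<longleftrightarrow> (\<forall>s. \<exists>X\<in>U. \<forall>y\<in>X. rvec y \<bullet> (a + s *\<^sub>R b) < 0)"

lemma unstable_rule_of_supercritical:
  assumes sc: "\<forall>u. stable_dir U u \<longrightarrow> u \<bullet> v \<le> 0" and pos: "\<theta> \<bullet> v > 0"
  shows "\<exists>X\<in>U. \<forall>y\<in>X. rvec y \<bullet> \<theta> < 0"
proof -
  have "\<theta> \<noteq> 0" using pos by auto
  define u where "u = (1 / norm \<theta>) *\<^sub>R \<theta>"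
  have "norm u = 1" "u \<bullet> v > 0" using \<open>\<theta> \<noteq> 0\<close> pos by (simp_all add: u_def)
  then have "\<not> stable_dir U u" using sc by force
  then obtain X where "X \<in> U" "\<forall>y\<in>X. (1 / norm \<theta>) * (rvec y \<bullet> \<theta>) < 0"
    using \<open>norm u = 1\<close> unfolding stable_dir_def u_def by auto
  then show ?thesis using \<open>\<theta> \<noteq> 0\<close> by (auto simp: divide_less_0_iff)
qed

definition slab :: "real^'d \<Rightarrow> real^'d \<Rightarrow> real \<Rightarrow> real \<Rightarrow> (int^'d) set" where
  "slab a b h w = {x. 0 \<le> rvec x \<bullet> a \<and> rvec x \<bullet> a < h \<and> 0 \<le> rvec x \<bullet> b \<and> rvec x \<bullet> b \<le> w}"

text \<open>A step by y from a site at height \<open>\<beta> = x \<bullet> b\<close> changes the potential by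
  \<open>y \<bullet> a + (\<sigma> + \<beta> / L) (y \<bullet> b) + (y \<bullet> b)\<^sup>2 / (2 L)\<close>: at height \<open>\<beta>\<close> it decreases along every
  rule that is unstable, with some margin, for the direction \<open>a + (\<sigma> + \<beta> / L) b\<close>.\<close>
definition tilted_potential :: "real^'d \<Rightarrow> real^'d \<Rightarrow> real \<Rightarrow> real \<Rightarrow> int^'d \<Rightarrow> real" where
  "tilted_potential a b \<sigma> L x = rvec x \<bullet> a + \<sigma> * (rvec x \<bullet> b) + (rvec x \<bullet> b)\<^sup>2 / (2 * L)"

lemma tilted_potential_step:
  assumes "L > 0"
  shows "tilted_potential a b \<sigma> L (x + y) - tilted_potential a b \<sigma> L x =
    rvec y \<bullet> a + (\<sigma> + (rvec x \<bullet> b) / L) * (rvec y \<bullet> b) + (rvec y \<bullet> b)\<^sup>2 / (2 * L)"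
  using assms
  by (simp add: tilted_potential_def inner_add_left field_simps power2_eq_square)

lemma fillable_slab:
  assumes "L > 0" "D\<^sup>2 < 2 * L * \<delta>" "D \<le> h"
    and bounds: "\<forall>X\<in>U. \<forall>y\<in>X. \<bar>rvec y \<bullet> a\<bar> \<le> D \<and> \<bar>rvec y \<bullet> b\<bar> \<le> D"
    and rules: "\<And>\<beta>. 0 \<le> \<beta> \<Longrightarrow> \<beta> \<le> w \<Longrightarrow> \<exists>X\<in>U. \<forall>y\<in>X.
        rvec y \<bullet> a + (\<sigma> + \<beta> / L) * (rvec y \<bullet> b) \<le> -\<delta> \<and> 0 \<le> \<beta> + rvec y \<bullet> b \<and> \<beta> + rvec y \<bullet> b \<le> w"
  shows "fillable U (slab a b h w)
      {x. h \<le> rvec x \<bullet> a \<and> 0 \<le> rvec x \<bullet> b \<and> rvec x \<bullet> b \<le> w \<and> tilted_potential a b \<sigma> L x \<le> \<tau>}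
      (tilted_potential a b \<sigma> L)"
    (is "fillable U ?R ?P ?\<psi>")
  unfolding fillable_def
proof
  fix x assume "x \<in> ?P"
  then obtain X where "X \<in> U" and X: "\<forall>y\<in>X.
      rvec y \<bullet> a + (\<sigma> + (rvec x \<bullet> b) / L) * (rvec y \<bullet> b) \<le> -\<delta> \<and>
      0 \<le> rvec x \<bullet> b + rvec y \<bullet> b \<and> rvec x \<bullet> b + rvec y \<bullet> b \<le> w"
    using rules by auto
  have "x + y \<in> ?R \<or> (x + y \<in> ?P \<and> ?\<psi> (x + y) < ?\<psi> x)" if "y \<in> X" for y
  proof -
    from bounds \<open>X \<in> U\<close> that have bounds: "\<bar>rvec y \<bullet> a\<bar> \<le> D" "\<bar>rvec y \<bullet> b\<bar> \<le> D"
      by auto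
    from X that have unstable: "rvec y \<bullet> a + (\<sigma> + (rvec x \<bullet> b) / L) * (rvec y \<bullet> b) \<le> -\<delta>"
      and height: "0 \<le> rvec x \<bullet> b + rvec y \<bullet> b" "rvec x \<bullet> b + rvec y \<bullet> b \<le> w"
      by auto
    have "(rvec y \<bullet> b)\<^sup>2 \<le> D\<^sup>2" using power_mono[OF bounds(2), of 2] by simp
    then have "(rvec y \<bullet> b)\<^sup>2 / (2 * L) < \<delta>"
      using assms(1,2) by (simp add: divide_less_eq mult.commute)
    then have decrease: "?\<psi> (x + y) < ?\<psi> x"
      using tilted_potential_step[OF \<open>L > 0\<close>, of a b \<sigma> x y] unstable by linarith
    show ?thesis
    proof (cases "h \<le> rvec (x + y) \<bullet> a")
      case True
      then show ?thesis using decrease height \<open>x \<in> ?P\<close> by (simp add: inner_add_left)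
    next
      case False
      have "h \<le> rvec x \<bullet> a" using \<open>x \<in> ?P\<close> by simp
      then have "0 \<le> rvec (x + y) \<bullet> a" using bounds \<open>D \<le> h\<close> by (simp add: inner_add_left abs_le_iff)
      then show ?thesis using False height by (simp add: slab_def inner_add_left)
    qed
  qed
  then show "\<exists>X\<in>U. \<forall>y\<in>X. x + y \<in> ?R \<or> (x + y \<in> ?P \<and> ?\<psi> (x + y) < ?\<psi> x)"
    using \<open>X \<in> U\<close> by blast
qed

lemma slab_band:
  assumes z: "rvec z \<bullet> a = h" "rvec z \<bullet> b = 0"
    and \<Gamma>: "\<And>\<beta>. 0 \<le> \<beta> \<Longrightarrow> \<beta> \<le> w \<Longrightarrow> \<bar>\<sigma> * \<beta> + \<beta>\<^sup>2 / (2 * L)\<bar> \<le> \<Gamma>" and "2 * \<Gamma> < h"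
  defines "P \<equiv> {x. h \<le> rvec x \<bullet> a \<and> 0 \<le> rvec x \<bullet> b \<and> rvec x \<bullet> b \<le> w \<and>
                   tilted_potential a b \<sigma> L x \<le> 2 * h + \<Gamma>}"
  shows "(\<lambda>x. z + x) ` slab a b h w \<subseteq> P"
    and "P \<subseteq> (\<lambda>x. z + x) ` slab a b h w \<union> (\<lambda>x. z + z + x) ` slab a b h w"
proof -
  have \<psi>: "tilted_potential a b \<sigma> L x = rvec x \<bullet> a + (\<sigma> * (rvec x \<bullet> b) + (rvec x \<bullet> b)\<^sup>2 / (2 * L))"
    for x by (simp add: tilted_potential_def)
  show "(\<lambda>x. z + x) ` slab a b h w \<subseteq> P"
  proof
    fix y assume "y \<in> (\<lambda>x. z + x) ` slab a b h w"
    then obtain x where x: "x \<in> slab a b h w" "y = z + x" by blast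
    then have "\<bar>\<sigma> * (rvec x \<bullet> b) + (rvec x \<bullet> b)\<^sup>2 / (2 * L)\<bar> \<le> \<Gamma>" using \<Gamma> by (simp add: slab_def)
    then show "y \<in> P" using x z unfolding P_def slab_def \<psi> by (simp add: inner_add_left abs_le_iff)
  qed
  show "P \<subseteq> (\<lambda>x. z + x) ` slab a b h w \<union> (\<lambda>x. z + z + x) ` slab a b h w"
  proof
    fix x assume "x \<in> P"
    then have "\<bar>\<sigma> * (rvec x \<bullet> b) + (rvec x \<bullet> b)\<^sup>2 / (2 * L)\<bar> \<le> \<Gamma>" using \<Gamma> by (simp add: P_def)
    then have "rvec x \<bullet> a < 3 * h" using \<open>x \<in> P\<close> \<open>2 * \<Gamma> < h\<close> unfolding P_def \<psi> by auto
    show "x \<in> (\<lambda>x. z + x) ` slab a b h w \<union> (\<lambda>x. z + z + x) ` slab a b h w"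
    proof (cases "rvec x \<bullet> a < 2 * h")
      case True
      then have "x - z \<in> slab a b h w"
        using \<open>x \<in> P\<close> z unfolding P_def slab_def by (simp add: inner_diff_left)
      then show ?thesis by (intro UnI1 rev_image_eqI[of "x - z"]) auto
    next
      case False
      have "rvec (x - z - z) \<bullet> a = rvec x \<bullet> a - h - h" "rvec (x - z - z) \<bullet> b = rvec x \<bullet> b"
        by (simp_all only: rvec_diff inner_diff_left z diff_zero)
      then have "x - z - z \<in> slab a b h w"
        using False \<open>x \<in> P\<close> \<open>rvec x \<bullet> a < 3 * h\<close> unfolding P_def slab_def by simp
      then show ?thesis by (intro UnI2 rev_image_eqI[of "x - z - z"]) auto
    qed
  qed
qed

lemma bounded_on_rules:
  fixes f :: "'a \<Rightarrow> real"
  assumes "finite U" "\<forall>X\<in>U. finite X"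
  obtains D where "D \<ge> 1" "\<forall>X\<in>U. \<forall>y\<in>X. f y \<le> D"
proof
  show "1 + (\<Sum>y\<in>\<Union>U. \<bar>f y\<bar>) \<ge> 1" by (simp add: sum_nonneg)
  show "\<forall>X\<in>U. \<forall>y\<in>X. f y \<le> 1 + (\<Sum>y\<in>\<Union>U. \<bar>f y\<bar>)"
  proof (intro ballI)
    fix X y assume "X \<in> U" "y \<in> X"
    then have "\<bar>f y\<bar> \<le> (\<Sum>y\<in>\<Union>U. \<bar>f y\<bar>)" using assms by (intro member_le_sum) auto
    then show "f y \<le> 1 + (\<Sum>y\<in>\<Union>U. \<bar>f y\<bar>)" by linarith
  qed
qed

lemma correction_bound:
  fixes \<sigma> \<beta> w L :: real
  assumes "L > 0" "0 \<le> \<beta>" "\<beta> \<le> w"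
  shows "\<bar>\<sigma> * \<beta> + \<beta>\<^sup>2 / (2 * L)\<bar> \<le> \<bar>\<sigma>\<bar> * w + w\<^sup>2 / (2 * L)"
proof -
  have "\<bar>\<sigma> * \<beta>\<bar> \<le> \<bar>\<sigma>\<bar> * w" using assms by (simp add: abs_mult mult_left_mono)
  moreover have "\<beta>\<^sup>2 / (2 * L) \<le> w\<^sup>2 / (2 * L)"
    using assms by (simp add: power_mono divide_right_mono)
  moreover have "\<beta>\<^sup>2 / (2 * L) \<ge> 0" using assms by simp
  ultimately show ?thesis by linarith
qed

text \<open>L is chosen so that the quadratic error \<open>(y \<bullet> b)\<^sup>2 / (2 L)\<close> of a step stays below the
  margin \<open>\<delta>\<close>, and h so that it exceeds twice the range \<open>\<Gamma>\<close> of the correction over the slab.\<close>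
lemma exists_slab_spreading:
  assumes "update_family U" and unstable: "unstable_line U a b"
    and p: "rvec p \<bullet> a > 0" "rvec p \<bullet> b = 0"
    and finite_slab: "\<And>h w. finite (slab a b h w)"
  obtains h w z xs where "h > 0" "w \<ge> 0" "rvec z \<bullet> a = h" "rvec z \<bullet> b = 0" "xs \<noteq> []"
    "set xs \<subseteq> (\<lambda>x. z + x) ` slab a b h w \<union> (\<lambda>x. z + z + x) ` slab a b h w"
    "zero_spreading U (slab a b h w) xs ((\<lambda>x. z + x) ` slab a b h w)"
proof -
  have fin: "finite U" and finX: "\<forall>X\<in>U. finite X \<and> X \<noteq> {}"
    using assms(1) unfolding update_family_def by auto
  have "\<forall>X\<in>U. finite X" using finX by blast
  then obtain D where "1 \<le> D" and bound: "\<forall>X\<in>U. \<forall>y\<in>X. \<bar>rvec y \<bullet> a\<bar> + \<bar>rvec y \<bullet> b\<bar> \<le> D"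
    using bounded_on_rules[OF fin, of "\<lambda>y. \<bar>rvec y \<bullet> a\<bar> + \<bar>rvec y \<bullet> b\<bar>"] by blast
  have D: "\<forall>X\<in>U. \<forall>y\<in>X. \<bar>rvec y \<bullet> a\<bar> \<le> D \<and> \<bar>rvec y \<bullet> b\<bar> \<le> D"
  proof (intro ballI)
    fix X y assume "X \<in> U" "y \<in> X"
    then have "\<bar>rvec y \<bullet> a\<bar> + \<bar>rvec y \<bullet> b\<bar> \<le> D" using bound by blast
    then show "\<bar>rvec y \<bullet> a\<bar> \<le> D \<and> \<bar>rvec y \<bullet> b\<bar> \<le> D" by linarith
  qed
  have Q: "\<forall>s. \<exists>X\<in>U. \<forall>y\<in>X. rvec y \<bullet> a + s * (rvec y \<bullet> b) < 0"
    using unstable unfolding unstable_line_def by (simp add: inner_add_right)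
  obtain \<delta> c \<sigma> where "\<delta> > 0" "c \<ge> 2" and rules: "\<And>L \<beta>. L \<ge> D + 1 \<Longrightarrow> 0 \<le> \<beta> \<Longrightarrow> \<beta> \<le> L * c \<Longrightarrow>
      \<exists>X\<in>U. \<forall>y\<in>X. rvec y \<bullet> a + (\<sigma> + \<beta> / L) * (rvec y \<bullet> b) \<le> -\<delta> \<and>
        0 \<le> \<beta> + rvec y \<bullet> b \<and> \<beta> + rvec y \<bullet> b \<le> L * c"
    using slab_rules[OF fin finX Q D] by blast
  define L where "L = D\<^sup>2 / \<delta> + D + 1"
  define w where "w = L * c"
  define \<Gamma> where "\<Gamma> = \<bar>\<sigma>\<bar> * w + w\<^sup>2 / (2 * L)"
  have "L \<ge> D + 1" "L > 0" using \<open>\<delta> > 0\<close> \<open>1 \<le> D\<close> by (simp_all add: L_def add_pos_nonneg)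
  have "D\<^sup>2 < 2 * L * \<delta>"
  proof -
    have "L * \<delta> = D\<^sup>2 + (D + 1) * \<delta>" using \<open>\<delta> > 0\<close> by (simp add: L_def field_simps)
    moreover have "(D + 1) * \<delta> > 0" using \<open>1 \<le> D\<close> \<open>\<delta> > 0\<close> by simp
    moreover have "D\<^sup>2 \<ge> 0" by simp
    ultimately show ?thesis by linarith
  qed
  have "w \<ge> 0" using \<open>L > 0\<close> \<open>c \<ge> 2\<close> by (simp add: w_def)
  have \<Gamma>: "\<bar>\<sigma> * \<beta> + \<beta>\<^sup>2 / (2 * L)\<bar> \<le> \<Gamma>" if "0 \<le> \<beta>" "\<beta> \<le> w" for \<beta>
    unfolding \<Gamma>_def using correction_bound[OF \<open>L > 0\<close> that] .
  have "\<Gamma> \<ge> 0" using \<Gamma>[of 0] \<open>w \<ge> 0\<close> by simp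
  obtain k :: nat where "2 * \<Gamma> + D + 1 < real k * (rvec p \<bullet> a)"
    using ex_less_of_nat_mult[OF p(1)] by blast
  define h where "h = real k * (rvec p \<bullet> a)"
  define z where "z = int k *s p"
  have "h \<ge> 2 * \<Gamma> + D + 1" using \<open>2 * \<Gamma> + D + 1 < real k * (rvec p \<bullet> a)\<close> by (simp add: h_def)
  have z: "rvec z \<bullet> a = h" "rvec z \<bullet> b = 0"
    using p(2) by (simp_all add: z_def h_def rvec_int_scale)
  define P where "P = {x. h \<le> rvec x \<bullet> a \<and> 0 \<le> rvec x \<bullet> b \<and> rvec x \<bullet> b \<le> w \<and>
                   tilted_potential a b \<sigma> L x \<le> 2 * h + \<Gamma>}"
  have "fillable U (slab a b h w) P (tilted_potential a b \<sigma> L)"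
    unfolding P_def
  proof (rule fillable_slab[OF \<open>L > 0\<close> \<open>D\<^sup>2 < 2 * L * \<delta>\<close> _ D])
    show "D \<le> h" using \<open>h \<ge> 2 * \<Gamma> + D + 1\<close> \<open>\<Gamma> \<ge> 0\<close> by linarith
  qed (use rules[OF \<open>L \<ge> D + 1\<close>] in \<open>simp add: w_def\<close>)
  moreover have band: "(\<lambda>x. z + x) ` slab a b h w \<subseteq> P"
    "P \<subseteq> (\<lambda>x. z + x) ` slab a b h w \<union> (\<lambda>x. z + z + x) ` slab a b h w"
    using slab_band[OF z \<Gamma>] \<open>h \<ge> 2 * \<Gamma> + D + 1\<close> \<open>1 \<le> D\<close> unfolding P_def by auto
  moreover have "finite P" using band(2) finite_slab by (auto intro: finite_subset)
  ultimately obtain xs where xs: "set xs = P" "zero_spreading U (slab a b h w) xs ((\<lambda>x. z + x) ` slab a b h w)"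
    using zero_spreading_of_fillable by metis
  have "h > 0" using \<open>h \<ge> 2 * \<Gamma> + D + 1\<close> \<open>\<Gamma> \<ge> 0\<close> \<open>1 \<le> D\<close> by linarith
  then have "0 \<in> slab a b h w" using \<open>w \<ge> 0\<close> by (simp add: slab_def)
  then have "xs \<noteq> []" using band(1) xs(1) by auto
  then show ?thesis using that \<open>h > 0\<close> \<open>w \<ge> 0\<close> z xs band(2) by simp
qed

lemma rvec_uminus [simp]: "rvec (- x) = - rvec x"
  by (simp add: rvec_def vec_eq_iff)

lemma unstable_line_scaleR:
  assumes "unstable_line U a b" "c > 0"
  shows "unstable_line U (c *\<^sub>R a) (c *\<^sub>R b)"
proof -
  have "c *\<^sub>R a + s *\<^sub>R c *\<^sub>R b = c *\<^sub>R (a + s *\<^sub>R b)" for s by (simp add: algebra_simps)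
  then show ?thesis using assms
    unfolding unstable_line_def by (simp add: mult_less_0_iff)
qed

section \<open>The plane\<close>

locale plane =
  fixes i j :: "'d::finite"
  assumes ij: "i \<noteq> j" and univ: "(UNIV::'d set) = {i, j}"
begin

definition rot :: "real^'d \<Rightarrow> real^'d" where
  "rot x = (\<chi> k. if k = i then - x$j else x$i)"

lemma rot_i [simp]: "rot x $ i = - x$j" by (simp add: rot_def)
lemma rot_j [simp]: "rot x $ j = x$i" using ij by (simp add: rot_def)

lemma vec2_eq_iff: "(x::real^'d) = y \<longleftrightarrow> x$i = y$i \<and> x$j = y$j"
  using univ by (auto simp: vec_eq_iff)

lemma inner2: "(x::real^'d) \<bullet> y = x$i * y$i + x$j * y$j"
  using ij by (simp add: inner_vec_def univ)

lemma rot_add: "rot (x + y) = rot x + rot y" by (simp add: vec2_eq_iff)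
lemma rot_scaleR: "rot (c *\<^sub>R x) = c *\<^sub>R rot x" by (simp add: vec2_eq_iff)
lemma rot_rot: "rot (rot x) = - x" by (simp add: vec2_eq_iff)
lemma inner_rot_self: "x \<bullet> rot x = 0" by (simp add: inner2 algebra_simps)
lemma inner_rot_rot: "rot x \<bullet> rot y = x \<bullet> y" by (simp add: inner2 algebra_simps)
lemma norm_rot: "norm (rot x) = norm x" by (simp add: norm_eq_sqrt_inner inner_rot_rot)

lemma inner_rot_decomposition:
  assumes "norm u = 1"
  shows "x = (x \<bullet> u) *\<^sub>R u + (x \<bullet> rot u) *\<^sub>R rot u"
proof -
  have n: "u$i * u$i + u$j * u$j = 1" using assms norm_eq_1[of u] by (simp add: inner2)
  have "x$i = x$i * (u$i * u$i + u$j * u$j)" "x$j = x$j * (u$i * u$i + u$j * u$j)"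
    by (simp_all add: n)
  then show ?thesis unfolding vec2_eq_iff inner2 by (simp add: algebra_simps)
qed

lemma lattice_point_near:
  fixes c :: "real^'d"
  obtains p where "\<And>w. norm w = 1 \<Longrightarrow> \<bar>(rvec p - c) \<bullet> w\<bar> \<le> 1"
proof -
  define p :: "int^'d" where "p = (\<chi> k. round (c$k))"
  have "\<bar>(rvec p - c) \<bullet> w\<bar> \<le> 1" if "norm w = 1" for w
  proof -
    have err: "\<bar>(rvec p - c)$k\<bar> \<le> 1/2" for k
      using of_int_round_abs_le[of "c$k"] by (simp add: p_def rvec_def)
    have unit: "\<bar>w$k\<bar> \<le> 1" for k
      using component_le_norm_cart[of w k] that by simp
    have "\<bar>(rvec p - c)$k * w$k\<bar> \<le> 1/2 * 1" for k
      unfolding abs_mult by (intro mult_mono err unit) auto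
    from this[of i] this[of j] show ?thesis unfolding inner2 by linarith
  qed
  then show ?thesis by (rule that)
qed

text \<open>Rounding \<open>N (v + (t1/2) rot v)\<close> to the lattice moves it by at most 1 in each of the
  directions v and rot v, which for large N keeps the tilt of the direction in \<open>]0, t1]\<close>.\<close>
lemma lattice_direction_near:
  assumes "norm v = 1" "t1 > 0"
  obtains t lam p where "0 < t" "t \<le> t1" "lam > 0" "rvec p = lam *\<^sub>R (v + t *\<^sub>R rot v)"
proof -
  define N :: nat where "N = nat \<lceil>2 / t1\<rceil> + 2"
  have "real N \<ge> 2 / t1 + 2" unfolding N_def by linarith
  then have "real N * t1 \<ge> (2 / t1 + 2) * t1" using \<open>t1 > 0\<close> by (simp add: mult_right_mono)
  moreover have "(2 / t1 + 2) * t1 = 2 + 2 * t1" using \<open>t1 > 0\<close> by (simp add: field_simps)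
  ultimately have big: "real N * t1 / 2 \<ge> 1 + t1" by simp
  define c where "c = real N *\<^sub>R (v + (t1 / 2) *\<^sub>R rot v)"
  obtain p where near: "\<And>w. norm w = 1 \<Longrightarrow> \<bar>(rvec p - c) \<bullet> w\<bar> \<le> 1"
    using lattice_point_near by blast
  define e where "e = rvec p - c"
  have ev: "\<bar>e \<bullet> v\<bar> \<le> 1" and er: "\<bar>e \<bullet> rot v\<bar> \<le> 1"
    using near[of v] near[of "rot v"] assms(1) norm_rot[of v] by (simp_all add: e_def)
  define \<alpha> where "\<alpha> = real N + e \<bullet> v"
  define \<beta> where "\<beta> = real N * t1 / 2 + e \<bullet> rot v"
  have "rvec p = c + e" by (simp add: e_def)
  also have "\<dots> = c + ((e \<bullet> v) *\<^sub>R v + (e \<bullet> rot v) *\<^sub>R rot v)"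
    using inner_rot_decomposition[OF assms(1), of e] by (rule arg_cong)
  also have "\<dots> = \<alpha> *\<^sub>R v + \<beta> *\<^sub>R rot v" by (simp add: c_def \<alpha>_def \<beta>_def algebra_simps)
  finally have p: "rvec p = \<alpha> *\<^sub>R v + \<beta> *\<^sub>R rot v" .
  have "\<alpha> > 0" using ev by (simp add: \<alpha>_def N_def abs_le_iff)
  moreover have "\<beta> > 0" using er big \<open>t1 > 0\<close> by (simp add: \<beta>_def abs_le_iff)
  moreover have "\<beta> \<le> t1 * \<alpha>"
  proof -
    have "t1 * (-1) \<le> t1 * (e \<bullet> v)" using ev \<open>t1 > 0\<close> by (intro mult_left_mono) (auto simp: abs_le_iff)
    then show ?thesis using er big by (simp add: \<alpha>_def \<beta>_def algebra_simps abs_le_iff)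
  qed
  ultimately show ?thesis
    using that[of "\<beta> / \<alpha>" \<alpha> p] p by (simp add: divide_le_eq mult.commute algebra_simps)
qed

lemma unstable_line_tilt:
  assumes line: "unstable_line U v (rot v)" and "t > 0" and "Xp \<in> U"
    and steep: "\<forall>y\<in>Xp. rvec y \<bullet> rot v < 0 \<and> (\<forall>r \<ge> 1 / t. r * (rvec y \<bullet> rot v) < rvec y \<bullet> v)"
  shows "unstable_line U (v + t *\<^sub>R rot v) (rot (v + t *\<^sub>R rot v))"
  unfolding unstable_line_def
proof
  fix s
  define A where "A y = rvec y \<bullet> v" for y
  define B where "B y = rvec y \<bullet> rot v" for y
  have tilted: "rvec y \<bullet> (v + t *\<^sub>R rot v + s *\<^sub>R rot (v + t *\<^sub>R rot v)) = (1 - s * t) * A y + (t + s) * B y"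
    for y by (simp add: A_def B_def rot_add rot_scaleR rot_rot inner_add_right algebra_simps)
  have "\<exists>X\<in>U. \<forall>y\<in>X. (1 - s * t) * A y + (t + s) * B y < 0"
  proof (cases "s * t < 1")
    case True
    obtain X where "X \<in> U" and X: "\<forall>y\<in>X. A y + ((t + s) / (1 - s * t)) * B y < 0"
      using line unfolding unstable_line_def A_def B_def
      by (metis (no_types) inner_add_right inner_scaleR_right)
    have "(1 - s * t) * A y + (t + s) * B y = (1 - s * t) * (A y + ((t + s) / (1 - s * t)) * B y)" for y
      using True by (simp add: field_simps)
    moreover have "(1 - s * t) * (A y + ((t + s) / (1 - s * t)) * B y) < 0" if "y \<in> X" for y
      using X that True by (intro mult_pos_neg) auto
    ultimately show ?thesis using \<open>X \<in> U\<close> by metis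
  next
    case False
    then have "s > 0" using \<open>t > 0\<close> by (smt (verit) mult_nonpos_nonneg)
    have "(1 - s * t) * A y + (t + s) * B y < 0" if "y \<in> Xp" for y
    proof (cases "s * t = 1")
      case True
      then show ?thesis using steep that \<open>s > 0\<close> \<open>t > 0\<close> by (simp add: mult_pos_neg B_def)
    next
      case False
      then have "s * t - 1 > 0" using \<open>\<not> s * t < 1\<close> by simp
      have "t * (t + s) \<ge> s * t - 1" by (simp add: algebra_simps)
      then have "(t + s) / (s * t - 1) \<ge> 1 / t"
        using \<open>s * t - 1 > 0\<close> \<open>t > 0\<close> by (simp add: field_simps)
      then have "(t + s) / (s * t - 1) * B y < A y" using steep that unfolding A_def B_def by blast
      then have "(s * t - 1) * ((t + s) / (s * t - 1) * B y) < (s * t - 1) * A y"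
        using \<open>s * t - 1 > 0\<close> by (intro mult_strict_left_mono)
      moreover have "(s * t - 1) * ((t + s) / (s * t - 1) * B y) = (t + s) * B y"
        using \<open>s * t - 1 > 0\<close> by simp
      ultimately show ?thesis by (simp add: algebra_simps)
    qed
    then show ?thesis using \<open>Xp \<in> U\<close> by blast
  qed
  then show "\<exists>X\<in>U. \<forall>y\<in>X. rvec y \<bullet> (v + t *\<^sub>R rot v + s *\<^sub>R rot (v + t *\<^sub>R rot v)) < 0"
    by (simp add: tilted)
qed

text \<open>Take a rule Xp unstable for all directions \<open>v - s rot v\<close> with s large. Either a site of
  Xp lies on the line through v, giving a lattice point on the ray of v, or all its sites lie
  strictly on one side of it; then the semicircle stays unstable after tilting v slightly
  towards a lattice direction.\<close>
lemma rational_unstable_line: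
  assumes "update_family U" "norm v = 1" and line: "unstable_line U v (rot v)"
  obtains u p where "norm u = 1" "rvec p \<bullet> u > 0" "rvec p \<bullet> rot u = 0" "unstable_line U u (rot u)"
proof -
  have fin: "finite U" and finX: "\<forall>X\<in>U. finite X \<and> X \<noteq> {}"
    using assms(1) unfolding update_family_def by auto
  define A where "A y = rvec y \<bullet> v" for y
  define B where "B y = rvec y \<bullet> rot v" for y
  have "\<forall>s. \<exists>X\<in>U. \<forall>y\<in>X. A y + s * (- B y) < 0"
  proof
    fix s
    obtain X where "X \<in> U" "\<forall>y\<in>X. rvec y \<bullet> (v + (- s) *\<^sub>R rot v) < 0"
      using line unfolding unstable_line_def by blast
    then show "\<exists>X\<in>U. \<forall>y\<in>X. A y + s * (- B y) < 0" by (auto simp: A_def B_def inner_diff_right)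
  qed
  then obtain Xp s0 \<delta> where "Xp \<in> U" "\<forall>y\<in>Xp. - B y \<ge> 0 \<and> (- B y = 0 \<longrightarrow> A y < 0)"
    "\<delta> > 0" "\<forall>s\<le>s0. \<forall>y\<in>Xp. A y + s * (- B y) \<le> -\<delta>"
    by (rule uniform_rule_at_bot[OF fin finX])
  then have Xp: "\<forall>y\<in>Xp. B y \<le> 0 \<and> (B y = 0 \<longrightarrow> A y < 0)" by simp
  show ?thesis
  proof (cases "\<exists>y\<in>Xp. B y = 0")
    case True
    then obtain y where "y \<in> Xp" "B y = 0" by blast
    then have "rvec (- y) \<bullet> v > 0" "rvec (- y) \<bullet> rot v = 0" using Xp by (auto simp: A_def B_def)
    then show ?thesis by (intro that[OF assms(2) _ _ line])
  next
    case False
    then have B_neg: "\<forall>y\<in>Xp. B y < 0" using Xp by (simp add: less_le)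
    define R0 where "R0 = 1 + (\<Sum>y\<in>Xp. \<bar>A y\<bar> / (- B y))"
    have "R0 \<ge> 1" unfolding R0_def using B_neg by (auto intro!: sum_nonneg divide_nonneg_neg)
    then have "1 / R0 > 0" by simp
    then obtain t lam p where "0 < t" "t \<le> 1 / R0" "lam > 0" and p: "rvec p = lam *\<^sub>R (v + t *\<^sub>R rot v)"
      by (rule lattice_direction_near[OF assms(2)])
    have "R0 \<le> 1 / t" using \<open>0 < t\<close> \<open>t \<le> 1 / R0\<close> \<open>R0 \<ge> 1\<close> by (simp add: field_simps)
    have "r * B y < A y" if "y \<in> Xp" "r \<ge> 1 / t" for y r
    proof -
      have "\<bar>A y\<bar> / (- B y) \<le> (\<Sum>y\<in>Xp. \<bar>A y\<bar> / (- B y))"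
        using finX \<open>Xp \<in> U\<close> that(1) B_neg by (intro member_le_sum) (auto intro!: divide_nonneg_neg)
      then have "\<bar>A y\<bar> / (- B y) < r" using that(2) \<open>R0 \<le> 1 / t\<close> unfolding R0_def by linarith
      moreover have "0 < - B y" using B_neg that(1) by simp
      ultimately have "\<bar>A y\<bar> < r * (- B y)" using pos_divide_less_eq by blast
      then show ?thesis by linarith
    qed
    then have steep: "\<forall>y\<in>Xp. rvec y \<bullet> rot v < 0 \<and> (\<forall>r \<ge> 1 / t. r * (rvec y \<bullet> rot v) < rvec y \<bullet> v)"
      using B_neg unfolding A_def B_def by blast
    define w where "w = v + t *\<^sub>R rot v"
    have "unstable_line U w (rot w)"
      unfolding w_def by (rule unstable_line_tilt[OF line \<open>0 < t\<close> \<open>Xp \<in> U\<close> steep])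
    have "w \<noteq> 0"
    proof
      assume "w = 0"
      then have "w \<bullet> v = 0" by simp
      then show False using assms(2) inner_rot_self[of v]
        by (simp add: w_def inner_add_left inner_commute[of "rot v"] norm_eq_1)
    qed
    define u where "u = (1 / norm w) *\<^sub>R w"
    have "norm u = 1" using \<open>w \<noteq> 0\<close> by (simp add: u_def)
    moreover have "rvec p \<bullet> u > 0"
      using p \<open>lam > 0\<close> \<open>w \<noteq> 0\<close> by (simp add: u_def w_def[symmetric] dot_square_norm power2_eq_square)
    moreover have "rvec p \<bullet> rot u = 0"
      using p by (simp add: u_def w_def[symmetric] rot_scaleR inner_rot_self)
    moreover have "unstable_line U u (rot u)"
      using unstable_line_scaleR[OF \<open>unstable_line U w (rot w)\<close>, of "1 / norm w"] \<open>w \<noteq> 0\<close>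
      by (simp add: u_def rot_scaleR)
    ultimately show ?thesis by (rule that)
  qed
qed

lemma slab_rot_eq:
  assumes "norm u = 1"
  shows "slab u (rot u) h w =
    {x. \<exists>t r. 0 \<le> t \<and> t < h \<and> 0 \<le> r \<and> r \<le> w \<and> rvec x = t *\<^sub>R u + r *\<^sub>R rot u}"
proof -
  have uu: "u \<bullet> u = 1" and "rot u \<bullet> rot u = 1" and "rot u \<bullet> u = 0"
    using assms inner_rot_self[of u] by (simp_all add: norm_eq_1 inner_rot_rot inner_commute)
  then have "(t *\<^sub>R u + r *\<^sub>R rot u) \<bullet> u = t" "(t *\<^sub>R u + r *\<^sub>R rot u) \<bullet> rot u = r" for t r
    by (simp_all add: inner_add_left inner_rot_self)
  then show ?thesis unfolding slab_def
    using inner_rot_decomposition[OF assms] by (auto simp del: inner_commute) metis+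
qed

lemma finite_slab_rot:
  assumes "norm u = 1"
  shows "finite (slab u (rot u) h w)"
proof (rule finite_subset[OF _ finite_rvec_norm_le])
  show "slab u (rot u) h w \<subseteq> {x. norm (rvec x) \<le> h + w}"
  proof
    fix x assume "x \<in> slab u (rot u) h w"
    then have "\<bar>rvec x \<bullet> u\<bar> + \<bar>rvec x \<bullet> rot u\<bar> \<le> h + w" by (simp add: slab_def)
    moreover have "norm (rvec x) \<le> \<bar>rvec x \<bullet> u\<bar> + \<bar>rvec x \<bullet> rot u\<bar>"
      using norm_triangle_ineq[of "(rvec x \<bullet> u) *\<^sub>R u" "(rvec x \<bullet> rot u) *\<^sub>R rot u"]
        inner_rot_decomposition[OF assms, of "rvec x"] assms norm_rot[of u] by simp
    ultimately show "x \<in> {x. norm (rvec x) \<le> h + w}" by simp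
  qed
qed

lemma supercritical_droplet:
  fixes U :: "(int^'d) set set"
  assumes "update_family U" "supercritical U"
  shows "\<exists>u R h z xs. norm u = 1 \<and> h > 0 \<and> rvec z = h *\<^sub>R u \<and> R \<noteq> {} \<and>
    (\<exists>a2 w. a2 \<ge> 0 \<and> norm w = 1 \<and> u \<bullet> w = 0 \<and>
       R = {x. \<exists>t r. 0 \<le> t \<and> t < h \<and> 0 \<le> r \<and> r \<le> a2 \<and> rvec x = t *\<^sub>R u + r *\<^sub>R w}) \<and>
    xs \<noteq> [] \<and> set xs \<subseteq> (\<lambda>x. z + x) ` R \<union> (\<lambda>x. z + z + x) ` R \<and>
    zero_spreading U R xs ((\<lambda>x. z + x) ` R)"
proof -
  obtain v where "norm v = 1" and sc: "\<forall>u. stable_dir U u \<longrightarrow> u \<bullet> v \<le> 0"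
    using assms(2) unfolding supercritical_def by blast
  have "(v + s *\<^sub>R rot v) \<bullet> v > 0" for s
    using \<open>norm v = 1\<close> inner_rot_self[of v]
    by (simp add: inner_add_left norm_eq_1 inner_commute[of "rot v"])
  then have "unstable_line U v (rot v)"
    unfolding unstable_line_def using unstable_rule_of_supercritical[OF sc] by blast
  then obtain u p where "norm u = 1" "rvec p \<bullet> u > 0" "rvec p \<bullet> rot u = 0" "unstable_line U u (rot u)"
    using rational_unstable_line[OF assms(1) \<open>norm v = 1\<close>] by blast
  then obtain h w z xs where "h > 0" "w \<ge> 0" "rvec z \<bullet> u = h" "rvec z \<bullet> rot u = 0" "xs \<noteq> []"
    "set xs \<subseteq> (\<lambda>x. z + x) ` slab u (rot u) h w \<union> (\<lambda>x. z + z + x) ` slab u (rot u) h w"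
    "zero_spreading U (slab u (rot u) h w) xs ((\<lambda>x. z + x) ` slab u (rot u) h w)"
    using exists_slab_spreading[OF assms(1)] finite_slab_rot by metis
  moreover have "rvec z = h *\<^sub>R u"
    using inner_rot_decomposition[OF \<open>norm u = 1\<close>, of "rvec z"] \<open>rvec z \<bullet> u = h\<close> \<open>rvec z \<bullet> rot u = 0\<close>
    by simp
  moreover have "0 \<in> slab u (rot u) h w" using \<open>h > 0\<close> \<open>w \<ge> 0\<close> by (simp add: slab_def)
  moreover have "norm (rot u) = 1" "u \<bullet> rot u = 0" using \<open>norm u = 1\<close> by (simp_all add: norm_rot inner_rot_self)
  ultimately show ?thesis
    using \<open>norm u = 1\<close> slab_rot_eq[OF \<open>norm u = 1\<close>]
    by (intro exI[of _ u] exI[of _ "slab u (rot u) h w"] exI[of _ h] exI[of _ z] exI[of _ xs]) blast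
qed

end

section \<open>The line\<close>

locale line =
  fixes i :: "'d::finite"
  assumes univ: "(UNIV::'d set) = {i}"
begin

lemma inner1: "(x::real^'d) \<bullet> y = x$i * y$i"
  by (simp add: inner_vec_def univ)

lemma unit_decomposition:
  fixes v x :: "real^'d"
  assumes "norm v = 1"
  shows "x = (x \<bullet> v) *\<^sub>R v"
proof -
  have "v$i * v$i = 1" using assms norm_eq_1[of v] by (simp add: inner1)
  then have "x$i = (x$i * v$i) * v$i" by (simp add: mult.assoc)
  show ?thesis unfolding vec_eq_iff
  proof
    fix k
    have "k = i" using univ by auto
    then show "x$k = ((x \<bullet> v) *\<^sub>R v)$k" using \<open>x$i = (x$i * v$i) * v$i\<close> by (simp add: inner1)
  qed
qed

lemma lattice_unit:
  fixes v :: "real^'d"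
  assumes "norm v = 1"
  obtains p where "rvec p = v"
proof -
  have "v$i * v$i = 1" using assms norm_eq_1[of v] by (simp add: inner1)
  then have "v$i = 1 \<or> v$i = -1" by (simp add: square_eq_1_iff)
  have "rvec (\<chi> k. round (v$k)) $ k = v $ k" for k
  proof -
    have "k = i" using univ by auto
    then show ?thesis using \<open>v$i = 1 \<or> v$i = -1\<close> round_of_int[of "-1", where 'a=real] by (auto simp: rvec_def)
  qed
  then have "rvec (\<chi> k. round (v$k)) = v" by (simp add: vec_eq_iff)
  then show ?thesis by (rule that)
qed

lemma slab_line_eq:
  fixes v :: "real^'d"
  assumes "norm v = 1" "0 \<le> w"
  shows "slab v 0 h w = {x. \<exists>t. 0 \<le> t \<and> t < h \<and> rvec x = t *\<^sub>R v}"
  using assms unit_decomposition[OF assms(1)] by (auto simp: slab_def norm_eq_1)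

lemma finite_slab_line:
  fixes v :: "real^'d"
  assumes "norm v = 1"
  shows "finite (slab v 0 h w)"
proof (rule finite_subset[OF _ finite_rvec_norm_le])
  have "norm (rvec x) = \<bar>rvec x \<bullet> v\<bar>" for x
    using unit_decomposition[OF assms, of "rvec x"] assms by (metis norm_scaleR mult_cancel_left1)
  then show "slab v 0 h w \<subseteq> {x. norm (rvec x) \<le> h}" by (auto simp: slab_def)
qed

lemma supercritical_droplet:
  fixes U :: "(int^'d) set set"
  assumes "update_family U" "supercritical U"
  shows "\<exists>u R h z xs. norm u = 1 \<and> h > 0 \<and> rvec z = h *\<^sub>R u \<and> R \<noteq> {} \<and>
    R = {x. \<exists>t. 0 \<le> t \<and> t < h \<and> rvec x = t *\<^sub>R u} \<and>
    xs \<noteq> [] \<and> set xs \<subseteq> (\<lambda>x. z + x) ` R \<union> (\<lambda>x. z + z + x) ` R \<and>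
    zero_spreading U R xs ((\<lambda>x. z + x) ` R)"
proof -
  obtain v where "norm v = 1" and sc: "\<forall>u. stable_dir U u \<longrightarrow> u \<bullet> v \<le> 0"
    using assms(2) unfolding supercritical_def by blast
  then have "v \<bullet> v > 0" by (simp add: norm_eq_1)
  then have "unstable_line U v 0"
    unfolding unstable_line_def using unstable_rule_of_supercritical[OF sc] by simp
  moreover obtain p where "rvec p = v" using lattice_unit[OF \<open>norm v = 1\<close>] .
  then have "rvec p \<bullet> v > 0" "rvec p \<bullet> 0 = 0" using \<open>v \<bullet> v > 0\<close> by simp_all
  ultimately obtain h w z xs where "h > 0" "w \<ge> 0" "rvec z \<bullet> v = h" "rvec z \<bullet> 0 = 0"
    and spread: "xs \<noteq> []" "set xs \<subseteq> (\<lambda>x. z + x) ` slab v 0 h w \<union> (\<lambda>x. z + z + x) ` slab v 0 h w"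
      "zero_spreading U (slab v 0 h w) xs ((\<lambda>x. z + x) ` slab v 0 h w)"
    using exists_slab_spreading[OF assms(1)] finite_slab_line[OF \<open>norm v = 1\<close>] by metis
  have "rvec z = h *\<^sub>R v"
    using unit_decomposition[OF \<open>norm v = 1\<close>, of "rvec z"] \<open>rvec z \<bullet> v = h\<close> by simp
  moreover have "0 \<in> slab v 0 h w" using \<open>h > 0\<close> \<open>w \<ge> 0\<close> by (simp add: slab_def)
  ultimately show ?thesis
    using \<open>norm v = 1\<close> \<open>h > 0\<close> spread slab_line_eq[OF \<open>norm v = 1\<close> \<open>w \<ge> 0\<close>]
    by (intro exI[of _ v] exI[of _ "slab v 0 h w"] exI[of _ h] exI[of _ z] exI[of _ xs]) blast
qed

end

theorem mainTheorem9:
  fixes U :: "(int^'d) set set"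
  assumes "CARD('d) \<in> {1, 2}"
    and "update_family U"
    and "supercritical U"
  shows "\<exists>(u::real^'d) (R::(int^'d) set) (a1::real) (z::int^'d) (xs::(int^'d) list).
     norm u = 1 \<and> a1 > 0 \<and> rvec z = a1 *\<^sub>R u \<and> R \<noteq> {} \<and>
     (if CARD('d) = 1
      then R = {x. \<exists>t. 0 \<le> t \<and> t < a1 \<and> rvec x = t *\<^sub>R u}
      else (\<exists>(a2::real) (w::real^'d). a2 \<ge> 0 \<and> norm w = 1 \<and> inner u w = 0 \<and>
              R = {x. \<exists>t r. 0 \<le> t \<and> t < a1 \<and> 0 \<le> r \<and> r \<le> a2 \<and>
                          rvec x = t *\<^sub>R u + r *\<^sub>R w})) \<and>
     xs \<noteq> [] \<and>
     set xs \<subseteq> ((\<lambda>x. z + x) ` R) \<union> ((\<lambda>x. z + z + x) ` R) \<and>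
     (\<forall>P0 P1 \<eta> (s::real) (ss::real list).
        harris_clocks P0 P1 \<longrightarrow> kcm_traj U P0 P1 \<eta> \<longrightarrow>
        length ss = length xs \<longrightarrow> s < hd ss \<longrightarrow> sorted_wrt (<) ss \<longrightarrow>
        (\<forall>i < length xs. ss ! i \<in> P0 (xs ! i)) \<longrightarrow>
        (\<forall>y \<in> R \<union> set xs. \<forall>t \<in> P1 y. \<not> (s < t \<and> t \<le> last ss)) \<longrightarrow>
        (\<forall>y \<in> R. \<eta> s y = 0) \<longrightarrow>
        (\<forall>y \<in> (\<lambda>x. z + x) ` R. \<eta> (last ss) y = 0))"
proof (cases "CARD('d) = 1")
  case True
  then obtain i :: 'd where "UNIV = {i}" using card_1_singletonE by blast
  then interpret line i by unfold_locales
  from supercritical_droplet[OF assms(2,3)] True show ?thesis by (simp add: zero_spreading_def)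
next
  case False
  then have "CARD('d) = 2" using assms(1) by simp
  then obtain i j :: 'd where "UNIV = {i, j}" "i \<noteq> j" by (metis card_2_iff)
  then interpret plane i j by unfold_locales simp_all
  from supercritical_droplet[OF assms(2,3)] False show ?thesis by (simp add: zero_spreading_def)
qed

end
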